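(* Let $H\in(0,1)$ and let $B^H$ be a fractional Brownian motion on $[0,1]$ with Hurst index $H$. Fix $n\ge1$ and let $\gamma_n$ be the maximal absolute value of the entries of the vector $\boldsymbol\Sigma_n^{-1}\mathbf{B}^H_n$. Then for all $m\ge1$ and $1\le k\le 2^{n+m-1}$, $$|\mu_n(m,k)|\le \gamma_n\cdot(2^n+1)\cdot 2^{-2(n+m)H}.$$
   Context: A fractional Brownian motion with Hurst index $H$ is a centered Gaussian process with $B^H(0)=0$ and covariance $r(s,t)=\mathbb{E}[B^H(s)B^H(t)]=\tfrac12(|s|^{2H}+|t|^{2H}-|s-t|^{2H})$. $t^n_i=i/2^n$, $\mathbf{B}^H_n=(B^H(t^n_0),\dots,B^H(t^n_{2^n}))$, $\boldsymbol\Sigma_n$ is the covariance matrix of $\mathbf{B}^H_n$ (which is singular since $B^H(0)=0$; $\boldsymbol\Sigma_n^{-1}$ denotes its generalized inverse, as in the paper). $\boldsymbol\alpha_n(m,k)=(B^H(t^{n+m}_{2k-2}),B^H(t^{n+m}_{2k-1}),B^H(t^{n+m}_{2k}))^\top$, $\boldsymbol\beta=(1/2,-1,1/2)^\top$, $\mu_n(m,k)=\boldsymbol\beta^\top\mathbb{E}[\boldsymbol\alpha_n(m,k)\mid\mathbf{B}^H_n]=\boldsymbol\beta^\top\boldsymbol\Sigma^{(m,k)}_n\boldsymbol\Sigma_n^{-1}\mathbf{B}^H_n$, where $\boldsymbol\Sigma^{(m,k)}_n$ is the $3\times(2^n+1)$ cross-covariance matrix of $\boldsymbol\alpha_n(m,k)$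 and $\mathbf{B}^H_n$. *)

theory Defs
  imports "HOL-Probability.Probability"
begin

definition fbm_cov :: "real \<Rightarrow> real \<Rightarrow> real \<Rightarrow> real" where
  "fbm_cov H s t = (\<bar>s\<bar> powr (2*H) + \<bar>t\<bar> powr (2*H) - \<bar>s - t\<bar> powr (2*H)) / 2"

text \<open>B is a fractional Brownian motion on [0,1] with Hurst index H on the probability
  space M: a centered Gaussian process (every finite linear combination of its values is
  either a.s. zero or centered normal with positive variance), with B(0) = 0 a.s. and
  covariance fbm_cov H.\<close>
definition is_fbm :: "'a measure \<Rightarrow> real \<Rightarrow> (real \<Rightarrow> 'a \<Rightarrow> real) \<Rightarrow> bool" where
  "is_fbm M H B \<longleftrightarrow>
     prob_space M \<and>
     (\<forall>t\<in>{0..1}. B t \<in> borel_measurable M) \<and>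
     (AE \<omega> in M. B 0 \<omega> = 0) \<and>
     (\<forall>t\<in>{0..1}. integrable M (B t) \<and> integral\<^sup>L M (B t) = 0) \<and>
     (\<forall>s\<in>{0..1}. \<forall>t\<in>{0..1}. integrable M (\<lambda>\<omega>. B s \<omega> * B t \<omega>) \<and>
          integral\<^sup>L M (\<lambda>\<omega>. B s \<omega> * B t \<omega>) = fbm_cov H s t) \<and>
     (\<forall>(ts :: real list) (cs :: real list). set ts \<subseteq> {0..1} \<longrightarrow> length cs = length ts \<longrightarrow>
        (let X = (\<lambda>\<omega>. \<Sum>i<length ts. cs ! i * B (ts ! i) \<omega>) in
          (AE \<omega> in M. X \<omega> = 0) \<or>
          (\<exists>\<sigma>>0. distributed M lborel X (\<lambda>x. ennreal (normal_density 0 \<sigma> x)))))"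

definition dyad :: "nat \<Rightarrow> nat \<Rightarrow> real" where
  "dyad n i = real i / 2 ^ n"

definition Sigma_n :: "real \<Rightarrow> nat \<Rightarrow> nat \<Rightarrow> nat \<Rightarrow> real" where
  "Sigma_n H n i j = fbm_cov H (dyad n i) (dyad n j)"

definition mat_mul :: "nat \<Rightarrow> (nat \<Rightarrow> nat \<Rightarrow> real) \<Rightarrow> (nat \<Rightarrow> nat \<Rightarrow> real) \<Rightarrow> nat \<Rightarrow> nat \<Rightarrow> real" where
  "mat_mul N A C i j = (\<Sum>l\<in>{0..N}. A i l * C l j)"

definition is_pinv :: "nat \<Rightarrow> (nat \<Rightarrow> nat \<Rightarrow> real) \<Rightarrow> (nat \<Rightarrow> nat \<Rightarrow> real) \<Rightarrow> bool" where
  "is_pinv N A G \<longleftrightarrow>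
     (\<forall>i\<in>{0..N}. \<forall>j\<in>{0..N}.
        mat_mul N (mat_mul N A G) A i j = A i j \<and>
        mat_mul N (mat_mul N G A) G i j = G i j \<and>
        mat_mul N A G i j = mat_mul N A G j i \<and>
        mat_mul N G A i j = mat_mul N G A j i)"

definition SinvB :: "nat \<Rightarrow> (nat \<Rightarrow> nat \<Rightarrow> real) \<Rightarrow> (real \<Rightarrow> 'a \<Rightarrow> real) \<Rightarrow> 'a \<Rightarrow> nat \<Rightarrow> real" where
  "SinvB n G B \<omega> j = (\<Sum>l\<in>{0..2^n}. G j l * B (dyad n l) \<omega>)"

definition gamma_n :: "nat \<Rightarrow> (nat \<Rightarrow> nat \<Rightarrow> real) \<Rightarrow> (real \<Rightarrow> 'a \<Rightarrow> real) \<Rightarrow> 'a \<Rightarrow> real" where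
  "gamma_n n G B \<omega> = Max ((\<lambda>j. \<bar>SinvB n G B \<omega> j\<bar>) ` {0..2^n})"

definition beta :: "nat \<Rightarrow> real" where
  "beta a = (if a = 1 then -1 else 1/2)"

text \<open>mu_n(m,k) = beta^T Sigma^{(m,k)}_n Sigma_n^{-1} B^H_n, where row a (a = 0,1,2) of the
  cross-covariance matrix Sigma^{(m,k)}_n has entries r(t^{n+m}_{2k-2+a}, t^n_j).\<close>
definition mu_n :: "real \<Rightarrow> nat \<Rightarrow> (nat \<Rightarrow> nat \<Rightarrow> real) \<Rightarrow> (real \<Rightarrow> 'a \<Rightarrow> real) \<Rightarrow> nat \<Rightarrow> nat \<Rightarrow> 'a \<Rightarrow> real" where
  "mu_n H n G B m k \<omega> =
     (\<Sum>a\<in>{0..2::nat}. beta a *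
        (\<Sum>j\<in>{0..2^n}. fbm_cov H (dyad (n+m) (2*k - 2 + a)) (dyad n j) * SinvB n G B \<omega> j))"

end

theory Submission
  imports Defs
begin

text \<open>Every row of the cross-covariance is a covariance evaluated at three consecutive points
  \<open>x - h, x, x + h\<close> of the finer grid, so \<open>\<mu>\<^sub>n(m,k)\<close> pairs the second differences
  \<open>r(x-h,s)/2 - r(x,s) + r(x+h,s)/2\<close>, \<open>s = t\<^sup>n\<^sub>j\<close>, with the entries of \<open>\<Sigma>\<^sub>n\<^sup>-\<^sup>1B\<^sub>n\<close>.
  Scaling by \<open>h\<close> writes such a second difference as \<open>h\<^sup>2\<^sup>H (D(x/h) - D((x-s)/h))/2\<close> with
  \<open>D(u) = |u-1|\<^sup>p/2 - |u|\<^sup>p + |u+1|\<^sup>p/2\<close>, \<open>p = 2H\<close>; and \<open>D\<close> ranges in \<open>[-1,1]\<close> for \<open>p \<le> 1\<close>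
  (subadditivity of \<open>t\<^sup>p\<close>) and in \<open>[0,2]\<close> for \<open>1 < p < 2\<close> (convexity of \<open>t\<^sup>p\<close>, concavity
  of \<open>t\<^sup>p\<^sup>-\<^sup>1\<close>). Hence each second difference is at most \<open>h\<^sup>2\<^sup>H\<close>, and summing over the
  \<open>2\<^sup>n + 1\<close> grid points gives the bound. The argument is pathwise and works for any
  matrix \<open>G\<close>.\<close>

lemma concave_on_powr:
  assumes "0 < q" "q \<le> 1"
  shows "concave_on {0<..} (\<lambda>x::real. x powr q)"
proof (rule f''_le0_imp_concave[where f'="\<lambda>x. q * x powr (q-1)" and f''="\<lambda>x. q * ((q-1) * x powr (q-1-1))"])
  fix x :: real assume x: "x \<in> {0<..}"
  then show "((\<lambda>x. x powr q) has_real_derivative q * x powr (q-1)) (at x)"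
    and "((\<lambda>x. q * x powr (q-1)) has_real_derivative q * ((q-1) * x powr (q-1-1))) (at x)"
    by (auto intro!: derivative_eq_intros)
  show "q * ((q-1) * x powr (q-1-1)) \<le> 0"
    using assms by (intro mult_nonneg_nonpos mult_nonpos_nonneg) auto
qed simp

lemma powr_add_le_add_powr:
  fixes a b q :: real
  assumes "0 < q" "q \<le> 1" "0 \<le> a" "0 \<le> b"
  shows "(a + b) powr q \<le> a powr q + b powr q"
proof (cases "a + b = 0")
  case True
  then show ?thesis using assms by simp
next
  case False
  then have s: "a + b > 0" using assms by simp
  have share: "(a + b) powr q * (c / (a + b)) \<le> c powr q" if "0 \<le> c" "c \<le> a + b" for c
  proof -
    have "c / (a + b) \<le> (c / (a + b)) powr q"
      using that s assms powr_mono'[of q 1 "c / (a + b)"] by simp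
    then have "(a + b) powr q * (c / (a + b)) \<le> (a + b) powr q * (c / (a + b)) powr q"
      by (rule mult_left_mono) simp
    also have "\<dots> = c powr q" using that s by (simp add: powr_divide)
    finally show ?thesis .
  qed
  have "(a + b) powr q = (a + b) powr q * (a / (a + b)) + (a + b) powr q * (b / (a + b))"
    using s by (simp add: distrib_left[symmetric] add_divide_distrib[symmetric])
  also have "\<dots> \<le> a powr q + b powr q"
    using share[of a] share[of b] assms by (intro add_mono) auto
  finally show ?thesis .
qed

lemma abs_powr_diff_le:
  fixes a b q :: real
  assumes "0 < q" "q \<le> 1" "0 \<le> a" "0 \<le> b"
  shows "\<bar>a powr q - b powr q\<bar> \<le> \<bar>a - b\<bar> powr q"
proof (cases "a \<le> b")
  case True
  then show ?thesis
    using powr_add_le_add_powr[of q a "b - a"] powr_mono2[of q a b] assms by simp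
next
  case False
  then show ?thesis
    using powr_add_le_add_powr[of q b "a - b"] powr_mono2[of q b a] assms by simp
qed

definition abs_powr_second_diff :: "real \<Rightarrow> real \<Rightarrow> real" where
  "abs_powr_second_diff p u = \<bar>u - 1\<bar> powr p / 2 - \<bar>u\<bar> powr p + \<bar>u + 1\<bar> powr p / 2"

lemma abs_powr_second_diff_minus: "abs_powr_second_diff p (-u) = abs_powr_second_diff p u"
  unfolding abs_powr_second_diff_def by (simp add: abs_minus_commute add.commute)

lemma abs_abs_powr_second_diff_le_1:
  assumes "0 < p" "p \<le> 1"
  shows "\<bar>abs_powr_second_diff p u\<bar> \<le> 1"
proof -
  have "\<bar>\<bar>u + d\<bar> powr p - \<bar>u\<bar> powr p\<bar> \<le> 1" if "\<bar>d\<bar> = 1" for d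
  proof -
    have "\<bar>\<bar>u + d\<bar> powr p - \<bar>u\<bar> powr p\<bar> \<le> \<bar>\<bar>u + d\<bar> - \<bar>u\<bar>\<bar> powr p"
      using assms by (intro abs_powr_diff_le) auto
    also have "\<dots> \<le> 1 powr p"
      using assms that by (intro powr_mono2) auto
    finally show ?thesis by simp
  qed
  from this[of "-1"] this[of 1] show ?thesis
    unfolding abs_powr_second_diff_def by (auto simp: abs_le_iff)
qed

lemma abs_powr_second_diff_nonneg:
  assumes "1 < p" "0 \<le> u"
  shows "0 \<le> abs_powr_second_diff p u"
proof (cases "1 < u")
  case True
  have "u powr p \<le> (1 - 1/2) * (u - 1) powr p + (1/2) * (u + 1) powr p"
    using convex_onD[OF powr_convex[of p], of "1/2" "u - 1" "u + 1"] True assms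
    by (simp add: field_simps)
  then show ?thesis
    using True unfolding abs_powr_second_diff_def by simp
next
  case False
  have "u powr p \<le> u"
    using assms False powr_mono'[of 1 p u] by (cases "u = 0") auto
  moreover have "u + 1 \<le> (u + 1) powr p"
    using assms powr_mono[of 1 p "u + 1"] by simp
  moreover have abs_eqs: "\<bar>u - 1\<bar> = 1 - u" "\<bar>u\<bar> = u" "\<bar>u + 1\<bar> = u + 1"
    using False assms by auto
  ultimately show ?thesis
    using False powr_ge_zero[of "1 - u" p] unfolding abs_powr_second_diff_def abs_eqs by linarith
qed

lemma abs_powr_second_diff_le_2_large:
  assumes "1 < p" "p < 2" "1 \<le> u"
  shows "abs_powr_second_diff p u \<le> 2"
proof -
  define q where "q = p - 1"
  have q: "0 < q" "q < 1" using assms by (auto simp: q_def)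
  have midpoint: "(u - 1) powr q + (u + 1) powr q \<le> 2 * u powr q"
  proof (cases "u = 1")
    case True
    then show ?thesis using q powr_mono[of q 1 2] by simp
  next
    case False
    have "(1 - 1/2) * (u - 1) powr q + (1/2) * (u + 1) powr q \<le> ((1 - 1/2) * (u - 1) + (1/2) * (u + 1)) powr q"
      using concave_onD[OF concave_on_powr[of q], of "1/2" "u - 1" "u + 1"] False assms q by simp
    then show ?thesis by (simp add: field_simps)
  qed
  have slope: "(u + 1) powr q - (u - 1) powr q \<le> 2"
  proof -
    have "\<bar>(u + 1) powr q - (u - 1) powr q\<bar> \<le> \<bar>(u + 1) - (u - 1)\<bar> powr q"
      using q assms by (intro abs_powr_diff_le) auto
    also have "\<dots> = 2 powr q"
      by simp
    also have "\<dots> \<le> 2 powr 1"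
      using q by (intro powr_mono) auto
    finally show ?thesis by simp
  qed
  \<comment> \<open>\<open>t\<^sup>p = t \<cdot> t\<^sup>q\<close> splits \<open>2D(u)\<close> into a concave second difference and a first difference.\<close>
  have split: "t powr p = t * t powr q" if "0 \<le> t" for t
    using powr_mult_base[OF that, of q] by (simp add: q_def)
  have abs_eqs: "\<bar>u - 1\<bar> = u - 1" "\<bar>u\<bar> = u" "\<bar>u + 1\<bar> = u + 1"
    using assms by auto
  have "2 * abs_powr_second_diff p u
      = u * ((u - 1) powr q - 2 * u powr q + (u + 1) powr q) + ((u + 1) powr q - (u - 1) powr q)"
    unfolding abs_powr_second_diff_def abs_eqs
    using assms split[of "u - 1"] split[of u] split[of "u + 1"] by (simp add: field_simps)
  moreover have "u * ((u - 1) powr q - 2 * u powr q + (u + 1) powr q) \<le> 0"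
    using midpoint assms by (intro mult_nonneg_nonpos) auto
  ultimately show ?thesis using slope by linarith
qed

lemma abs_powr_second_diff_le_2_small:
  assumes "1 < p" "p < 2" "0 \<le> u" "u < 1"
  shows "abs_powr_second_diff p u \<le> 2"
proof -
  have "(1 - u) powr p \<le> 1"
    using assms powr_mono2[of p "1 - u" 1] by simp
  moreover have "(u + 1) powr p \<le> (u + 1)\<^sup>2"
    using assms powr_mono[of p 2 "u + 1"] by simp
  moreover have "u\<^sup>2 \<le> u powr p"
    using assms powr_mono'[of p 2 u] by (cases "u = 0") auto
  moreover have "(u + 1)\<^sup>2 - 2 * u\<^sup>2 = 2 - (1 - u)\<^sup>2"
    by algebra
  moreover have abs_eqs: "\<bar>u - 1\<bar> = 1 - u" "\<bar>u\<bar> = u" "\<bar>u + 1\<bar> = u + 1"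
    using assms by auto
  ultimately show ?thesis
    using zero_le_power2[of "1 - u"] unfolding abs_powr_second_diff_def abs_eqs by linarith
qed

lemma abs_powr_second_diff_range:
  assumes "1 < p" "p < 2"
  shows "0 \<le> abs_powr_second_diff p u \<and> abs_powr_second_diff p u \<le> 2"
proof -
  have "0 \<le> abs_powr_second_diff p v \<and> abs_powr_second_diff p v \<le> 2" if "0 \<le> v" for v
    using that assms abs_powr_second_diff_nonneg abs_powr_second_diff_le_2_large
      abs_powr_second_diff_le_2_small by (cases "1 \<le> v") auto
  from this[of u] this[of "-u"] show ?thesis
    by (cases "0 \<le> u") (auto simp: abs_powr_second_diff_minus)
qed

lemma abs_powr_second_diff_diff_le_2:
  assumes "0 < p" "p < 2"
  shows "\<bar>abs_powr_second_diff p u - abs_powr_second_diff p v\<bar> \<le> 2"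
proof (cases "p \<le> 1")
  case True
  then show ?thesis
    using abs_abs_powr_second_diff_le_1[of p u] abs_abs_powr_second_diff_le_1[of p v] assms by auto
next
  case False
  then show ?thesis
    using abs_powr_second_diff_range[of p u] abs_powr_second_diff_range[of p v] assms by auto
qed

definition fbm_cov_second_diff :: "real \<Rightarrow> real \<Rightarrow> real \<Rightarrow> real \<Rightarrow> real" where
  "fbm_cov_second_diff H x h s = 1/2 * fbm_cov H (x - h) s - fbm_cov H x s + 1/2 * fbm_cov H (x + h) s"

lemma fbm_cov_second_diff_scaled:
  assumes "0 < h"
  shows "fbm_cov_second_diff H x h s
    = h powr (2*H) * (abs_powr_second_diff (2*H) (x/h) - abs_powr_second_diff (2*H) ((x - s)/h)) / 2"
proof -
  have rescale: "\<bar>y\<bar> powr (2*H) = h powr (2*H) * \<bar>y/h\<bar> powr (2*H)" for y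
    using assms by (simp add: abs_mult powr_mult[symmetric])
  have shifts: "(x - h)/h = x/h - 1" "(x + h)/h = x/h + 1"
      "(x - h - s)/h = (x - s)/h - 1" "(x + h - s)/h = (x - s)/h + 1"
    using assms by (auto simp: field_simps)
  show ?thesis
    unfolding fbm_cov_second_diff_def fbm_cov_def abs_powr_second_diff_def
      rescale[of "x - h"] rescale[of x] rescale[of "x + h"]
      rescale[of "x - h - s"] rescale[of "x - s"] rescale[of "x + h - s"] shifts
    by (simp add: field_simps)
qed

lemma abs_fbm_cov_second_diff_le:
  assumes "0 < H" "H < 1" "0 < h"
  shows "\<bar>fbm_cov_second_diff H x h s\<bar> \<le> h powr (2*H)"
proof -
  have "\<bar>fbm_cov_second_diff H x h s\<bar>
      = h powr (2*H) * \<bar>abs_powr_second_diff (2*H) (x/h) - abs_powr_second_diff (2*H) ((x - s)/h)\<bar> / 2"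
    unfolding fbm_cov_second_diff_scaled[OF assms(3)] by (simp add: abs_mult)
  also have "\<dots> \<le> h powr (2*H) * 2 / 2"
    using abs_powr_second_diff_diff_le_2[of "2*H"] assms
    by (intro divide_right_mono mult_left_mono) auto
  finally show ?thesis by simp
qed

lemma inverse_power_powr:
  fixes b a :: real
  assumes "0 < b"
  shows "(1 / b^N) powr a = b powr (- real N * a)"
  using assms by (simp add: powr_divide powr_realpow[symmetric] powr_powr powr_minus_divide)

lemma mu_n_eq_sum_second_diff:
  assumes "1 \<le> k"
  shows "mu_n H n G B m k \<omega> = (\<Sum>j\<in>{0..2^n}.
    fbm_cov_second_diff H (dyad (n+m) (2*k - 1)) (1 / 2^(n+m)) (dyad n j) * SinvB n G B \<omega> j)"
proof -
  have points: "dyad (n+m) (2*k - 2 + a) = dyad (n+m) (2*k - 1) + (real a - 1) / 2^(n+m)" for a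
    using assms by (simp add: dyad_def of_nat_diff field_simps)
  have "{0..2::nat} = {0, 1, 2}"
    by auto
  then show ?thesis
    unfolding mu_n_def fbm_cov_second_diff_def points
    by (simp add: beta_def sum.distrib sum_subtractf sum_negf sum_distrib_left sum_distrib_right
        algebra_simps diff_divide_distrib)
qed

lemma abs_SinvB_le_gamma_n:
  "j \<in> {0..2^n} \<Longrightarrow> \<bar>SinvB n G B \<omega> j\<bar> \<le> gamma_n n G B \<omega>"
  unfolding gamma_n_def by (intro Max_ge) auto

theorem lemma7:
  fixes M :: "'a measure" and H :: real and B :: "real \<Rightarrow> 'a \<Rightarrow> real"
    and n :: nat and G :: "nat \<Rightarrow> nat \<Rightarrow> real"
  assumes "0 < H" "H < 1"
    and "is_fbm M H B"
    and "n \<ge> 1"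
    and "is_pinv (2^n) (Sigma_n H n) G"
  shows "\<forall>\<omega>\<in>space M. \<forall>m k. m \<ge> 1 \<longrightarrow> 1 \<le> k \<longrightarrow> k \<le> 2^(n+m-1) \<longrightarrow>
           \<bar>mu_n H n G B m k \<omega>\<bar> \<le> gamma_n n G B \<omega> * (2^n + 1) * 2 powr (-2 * real (n+m) * H)"
proof (intro ballI allI impI)
  fix \<omega> and m k :: nat
  assume "1 \<le> k"
  define h :: real where "h = 1 / 2^(n+m)"
  let ?D = "\<lambda>j. fbm_cov_second_diff H (dyad (n+m) (2*k - 1)) h (dyad n j)"
  have "\<bar>mu_n H n G B m k \<omega>\<bar> \<le> (\<Sum>j\<in>{0..2^n}. \<bar>?D j\<bar> * \<bar>SinvB n G B \<omega> j\<bar>)"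
    unfolding mu_n_eq_sum_second_diff[OF \<open>1 \<le> k\<close>] h_def abs_mult[symmetric]
    by (rule sum_abs)
  also have "\<dots> \<le> (\<Sum>j\<in>{0..(2::nat)^n}. h powr (2*H) * gamma_n n G B \<omega>)"
    using abs_fbm_cov_second_diff_le[OF assms(1,2)] abs_SinvB_le_gamma_n
    by (intro sum_mono mult_mono) (auto simp: h_def)
  also have "\<dots> = gamma_n n G B \<omega> * (2^n + 1) * h powr (2*H)"
    by simp
  also have "h powr (2*H) = 2 powr (-2 * real (n+m) * H)"
    using inverse_power_powr[of 2 "n+m" "2*H"] by (simp add: h_def algebra_simps)
  finally show "\<bar>mu_n H n G B m k \<omega>\<bar> \<le> gamma_n n G B \<omega> * (2^n + 1) * 2 powr (-2 * real (n+m) * H)" .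
qed

end
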